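(* Let $X$ be an extensible marked Dynkin diagram with $d$ nodes and let $n\ge d$ be such that $\det(X_n)\ne0$. Then $P(X_n)/Q(X_n)$ is a cyclic group generated by the class $[\overline{\omega}_1^{(n)}]$ of $\overline{\omega}_1^{(n)}=\omega_n^{(n)}$.
   Context: A marked Dynkin diagram $X$ has nodes $1,\dots,d$ with node $d$ distinguished and symmetrizable generalized Cartan matrix $C(X)$. For $n\ge d$, $X_n$ is obtained by attaching a simply-laced chain of new nodes $d+1,\dots,n$ to node $d$ (so $C(X_n)$ has $C(X)$ as upper-left block, $2$ on the remaining diagonal, $-1$ in positions $(i,i+1),(i+1,i)$ for $d\le i<n$, $0$ elsewhere). $\det(Y)$ is the determinant of the generalized Cartan matrix of $Y$. The sequence $\det(X_n)$, $n\ge d$, is arithmetic with common difference $\Delta$; $X$ is extensible if $\Delta\ne0$, $\det(X)\ne0$ and $\gcd(\Delta,\det X)=1$. For the Kac–Moody algebra $\mathfrak g(X_n)$: simple roots $\alpha_i^{(n)}$, simple coroots $\check\alpha_i^{(n)}$ with $\alpha_j^{(n)}(\check\alpha_i^{(n)})=C(X_n)_{ij}$; root lattice $Q(X_n)=\bigoplus_i\mathbb Z\alpha_i^{(n)}$; weight lattice $P(X_n)=\{\lambda\in\mathfrak h^*(X_n):\lambda(\check\alpha_i^{(n)})\in\mathbb Z\ \forall i\}$; fundamental weights $\omega_i^{(n)}$ with $\omega_i^{(n)}(\check\alpha_j^{(n)})=\delta_{ij}$. *)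

theory Defs
  imports "HOL-Combinatorics.Permutations" Complex_Main
begin

text \<open>Matrices are functions nat => nat => int, indexed by 1..m.\<close>

definition mat_det :: "(nat \<Rightarrow> nat \<Rightarrow> int) \<Rightarrow> nat \<Rightarrow> int" where
  "mat_det A m = (\<Sum>p | p permutes {1..m}. sign p * (\<Prod>i\<in>{1..m}. A i (p i)))"

definition symmetrizable_gcm :: "(nat \<Rightarrow> nat \<Rightarrow> int) \<Rightarrow> nat \<Rightarrow> bool" where
  "symmetrizable_gcm C d \<longleftrightarrow>
     (\<forall>i\<in>{1..d}. C i i = 2) \<and>
     (\<forall>i\<in>{1..d}. \<forall>j\<in>{1..d}. i \<noteq> j \<longrightarrow> C i j \<le> 0) \<and>
     (\<forall>i\<in>{1..d}. \<forall>j\<in>{1..d}. C i j = 0 \<longleftrightarrow> C j i = 0) \<and>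
     (\<exists>e :: nat \<Rightarrow> real. (\<forall>i\<in>{1..d}. e i > 0) \<and>
        (\<forall>i\<in>{1..d}. \<forall>j\<in>{1..d}. e i * of_int (C i j) = e j * of_int (C j i)))"

text \<open>Marked Dynkin diagram X: d >= 1 nodes, node d distinguished, GCM C.\<close>
definition marked_dynkin :: "(nat \<Rightarrow> nat \<Rightarrow> int) \<Rightarrow> nat \<Rightarrow> bool" where
  "marked_dynkin C d \<longleftrightarrow> d \<ge> 1 \<and> symmetrizable_gcm C d"

text \<open>Cartan matrix of X_n: attach a simply-laced chain d+1..n to node d
  (meaningful on indices 1..n).\<close>
definition ext_cartan :: "(nat \<Rightarrow> nat \<Rightarrow> int) \<Rightarrow> nat \<Rightarrow> nat \<Rightarrow> nat \<Rightarrow> int" where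
  "ext_cartan C d i j =
     (if i \<le> d \<and> j \<le> d then C i j
      else if i = j then 2
      else if (i + 1 = j \<or> j + 1 = i) \<and> d \<le> min i j then -1
      else 0)"

definition det_ext :: "(nat \<Rightarrow> nat \<Rightarrow> int) \<Rightarrow> nat \<Rightarrow> nat \<Rightarrow> int" where
  "det_ext C d n = mat_det (ext_cartan C d) n"

text \<open>Common difference of the arithmetic sequence det(X_n), n >= d.\<close>
definition delta :: "(nat \<Rightarrow> nat \<Rightarrow> int) \<Rightarrow> nat \<Rightarrow> int" where
  "delta C d = det_ext C d (d + 1) - det_ext C d d"

definition extensible :: "(nat \<Rightarrow> nat \<Rightarrow> int) \<Rightarrow> nat \<Rightarrow> bool" where
  "extensible C d \<longleftrightarrow> marked_dynkin C d \<and> delta C d \<noteq> 0 \<and> mat_det C d \<noteq> 0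
     \<and> gcd (delta C d) (mat_det C d) = 1"

text \<open>For a nonsingular Cartan matrix A of size m, h^* has basis the simple
  roots; an element lambda = sum_j c_j alpha_j is represented by its coordinate
  function c (supported on 1..m). Then
  lambda(coroot_i) = sum_j c_j alpha_j(coroot_i) = sum_j c_j A i j.\<close>
definition coroot_pairing :: "(nat \<Rightarrow> nat \<Rightarrow> int) \<Rightarrow> nat \<Rightarrow> (nat \<Rightarrow> complex) \<Rightarrow> nat \<Rightarrow> complex" where
  "coroot_pairing A m c i = (\<Sum>j\<in>{1..m}. c j * of_int (A i j))"

definition hdual :: "nat \<Rightarrow> (nat \<Rightarrow> complex) set" where
  "hdual m = {c. \<forall>j. j \<notin> {1..m} \<longrightarrow> c j = 0}"

definition weight_lattice :: "(nat \<Rightarrow> nat \<Rightarrow> int) \<Rightarrow> nat \<Rightarrow> (nat \<Rightarrow> complex) set" where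
  "weight_lattice A m = {c \<in> hdual m. \<forall>i\<in>{1..m}. coroot_pairing A m c i \<in> \<int>}"

definition root_lattice :: "nat \<Rightarrow> (nat \<Rightarrow> complex) set" where
  "root_lattice m = {c \<in> hdual m. \<forall>j\<in>{1..m}. c j \<in> \<int>}"

definition fund_weight :: "(nat \<Rightarrow> nat \<Rightarrow> int) \<Rightarrow> nat \<Rightarrow> nat \<Rightarrow> (nat \<Rightarrow> complex)" where
  "fund_weight A m k = (THE c. c \<in> hdual m \<and>
      (\<forall>i\<in>{1..m}. coroot_pairing A m c i = (if i = k then 1 else 0)))"

end

theory Submission
  imports Defs "Jordan_Normal_Form.Determinant"
begin

text \<open>Let \<open>D\<^sub>k\<close> be the \<open>k\<close>-th leading principal minor of the Cartan matrix, and
  write weights in the basis of simple roots. By Cramer's rule \<open>D\<^sub>m w \<in> \<int>\<^sup>m\<close> for every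
  weight \<open>w\<close>, and the last coordinate of \<open>\<omega>\<^sub>m\<close> is \<open>D\<^sub>m\<^sub>-\<^sub>1 / D\<^sub>m\<close>. If \<open>D\<^sub>m\<^sub>-\<^sub>1\<close>
  and \<open>D\<^sub>m\<close> are coprime, subtracting a suitable integer multiple of \<open>\<omega>\<^sub>m\<close> from \<open>w\<close>
  makes its last coordinate integral. The other coordinates then form a weight of the leading
  \<open>(m-1)\<close>-block, so they become integral after multiplication by \<open>D\<^sub>m\<^sub>-\<^sub>1\<close> as well as
  by \<open>D\<^sub>m\<close>, hence are integers. For \<open>X\<^sub>n\<close> we have \<open>D\<^sub>n = det X + (n - d)\<Delta>\<close> and
  \<open>D\<^sub>n\<^sub>-\<^sub>1 = D\<^sub>n - \<Delta>\<close>, which are coprime because \<open>gcd(\<Delta>, det X) = 1\<close>.\<close>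

definition mat_of_fun :: "(nat \<Rightarrow> nat \<Rightarrow> int) \<Rightarrow> nat \<Rightarrow> int mat" where
  "mat_of_fun B m = mat m m (\<lambda>(i, j). B (Suc i) (Suc j))"

lemma mat_of_fun_carrier [simp]: "mat_of_fun B m \<in> carrier_mat m m"
  by (simp add: mat_of_fun_def)

lemma mat_delete_last_mat_of_fun: "mat_delete (mat_of_fun B (Suc m)) m m = mat_of_fun B m"
  by (rule eq_matI) (auto simp: mat_delete_def mat_of_fun_def)

lemma mat_det_cong:
  assumes "\<And>i j. i \<in> {1..m} \<Longrightarrow> j \<in> {1..m} \<Longrightarrow> B i j = B' i j"
  shows "mat_det B m = mat_det B' m"
  unfolding mat_det_def
proof (intro sum.cong refl arg_cong2[where f = "(*)"] prod.cong)
  fix p i assume "p \<in> {p. p permutes {1..m}}" and i: "i \<in> {1..m}"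
  then have "p i \<in> {1..m}" using permutes_in_image[of p "{1..m}" i] by simp
  then show "B i (p i) = B' i (p i)" using assms i by blast
qed

text \<open>Conjugation by \<open>Suc\<close> turns permutations of \<open>{0..<m}\<close> (the indexing of
  \<^const>\<open>det\<close>) into permutations of \<open>{1..m}\<close> (the indexing of \<^const>\<open>mat_det\<close>).\<close>

definition shift_perm :: "nat \<Rightarrow> (nat \<Rightarrow> nat) \<Rightarrow> nat \<Rightarrow> nat" where
  "shift_perm m p x = (if x \<in> {1..m} then Suc (p (x - 1)) else x)"

lemma bij_betw_Suc_atLeastLessThan: "bij_betw Suc {0..<m} {1..m}"
  by (simp add: bij_betw_def image_Suc_atLeastLessThan atLeastLessThanSuc_atLeastAtMost)

lemma shift_perm_permutes:
  assumes "p permutes {0..<m}"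
  shows "shift_perm m p permutes {1..m}" and "sign (shift_perm m p) = sign p"
proof -
  interpret permutes_bij_finite p "{0..<m}" "{1..m}" Suc "\<lambda>x. x - 1" "shift_perm m p"
    by unfold_locales
      (use assms bij_betw_Suc_atLeastLessThan in \<open>auto intro!: eq_reflection simp: shift_perm_def\<close>)
  show "shift_perm m p permutes {1..m}" by (rule permutes_p')
  show "sign (shift_perm m p) = sign p" by (rule sign_p')
qed

lemma bij_betw_shift_perm:
  "bij_betw (shift_perm m) {p. p permutes {0..<m}} {q. q permutes {1..m}}"
proof -
  define unshift where "unshift q x = (if x \<in> {0..<m} then q (Suc x) - 1 else x)" for q x
  have bij_pred: "bij_betw (\<lambda>x. x - 1) {1..m} {0..<m}"
    using bij_betw_inv_into_left[OF bij_betw_Suc_atLeastLessThan]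
      bij_betw_imp_inj_on[OF bij_betw_Suc_atLeastLessThan]
    by (intro bij_betw_byWitness[where f' = Suc]) (auto simp: image_iff intro: bexI[of _ "Suc _"])
  have unshift: "unshift q permutes {0..<m}" if q: "q permutes {1..m}" for q
  proof -
    interpret permutes_bij q "{1..m}" "{0..<m}" "\<lambda>x. x - 1" Suc "unshift q"
      by unfold_locales (use q bij_pred in \<open>auto intro!: eq_reflection simp: unshift_def\<close>)
    show ?thesis by (rule permutes_p')
  qed
  show ?thesis
  proof (rule bij_betw_byWitness[where f' = unshift])
    show "\<forall>p\<in>{p. p permutes {0..<m}}. unshift (shift_perm m p) = p"
    proof (intro ballI ext)
      fix p x assume "p \<in> {p. p permutes {0..<m}}"
      then have p: "p permutes {0..<m}" by simp
      show "unshift (shift_perm m p) x = p x"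
        using permutes_in_image[OF p, of x] permutes_not_in[OF p, of x]
        by (auto simp: unshift_def shift_perm_def)
    qed
    show "\<forall>q\<in>{q. q permutes {1..m}}. shift_perm m (unshift q) = q"
    proof (intro ballI ext)
      fix q x assume "q \<in> {q. q permutes {1..m}}"
      then have q: "q permutes {1..m}" by simp
      show "shift_perm m (unshift q) x = q x"
        using permutes_in_image[OF q, of x] permutes_not_in[OF q, of x]
        by (cases x) (auto simp: unshift_def shift_perm_def)
    qed
  qed (use shift_perm_permutes(1) unshift in blast)+
qed

lemma mat_det_eq_det: "mat_det B m = det (mat_of_fun B m)"
proof -
  have "det (mat_of_fun B m) =
      (\<Sum>p | p permutes {0..<m}. signof p * (\<Prod>i = 0..<m. mat_of_fun B m $$ (i, p i)))"
    by (rule det_def') simp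
  also have "\<dots> = (\<Sum>p | p permutes {0..<m}.
      sign (shift_perm m p) * (\<Prod>i\<in>{1..m}. B i (shift_perm m p i)))"
  proof (rule sum.cong)
    fix p assume "p \<in> {p. p permutes {0..<m}}"
    then have p: "p permutes {0..<m}" by simp
    have "(\<Prod>i\<in>{1..m}. B i (shift_perm m p i)) =
        (\<Prod>i = 0..<m. B (Suc i) (shift_perm m p (Suc i)))"
      by (simp add: prod.atLeast1_atMost_eq atLeast0LessThan)
    also have "\<dots> = (\<Prod>i = 0..<m. mat_of_fun B m $$ (i, p i))"
      using permutes_in_image[OF p] by (auto simp: mat_of_fun_def shift_perm_def intro!: prod.cong)
    finally show "signof p * (\<Prod>i = 0..<m. mat_of_fun B m $$ (i, p i)) =
        sign (shift_perm m p) * (\<Prod>i\<in>{1..m}. B i (shift_perm m p i))"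
      using shift_perm_permutes(2)[OF p] by simp
  qed simp
  also have "\<dots> = mat_det B m"
    unfolding mat_det_def using bij_betw_shift_perm by (rule sum.reindex_bij_betw)
  finally show ?thesis by simp
qed

definition adjugate :: "(nat \<Rightarrow> nat \<Rightarrow> int) \<Rightarrow> nat \<Rightarrow> nat \<Rightarrow> nat \<Rightarrow> int" where
  "adjugate B m i j = adj_mat (mat_of_fun B m) $$ (i - 1, j - 1)"

lemma sum_mult_adjugate:
  assumes "i \<in> {1..m}" "j \<in> {1..m}"
  shows "(\<Sum>k\<in>{1..m}. B i k * adjugate B m k j) = (if i = j then mat_det B m else 0)"
proof -
  let ?J = "mat_of_fun B m"
  have "(\<Sum>k\<in>{1..m}. B i k * adjugate B m k j) = (?J * adj_mat ?J) $$ (i - 1, j - 1)"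
    using assms adj_mat(1)[of ?J m]
    by (auto simp: index_mult_mat scalar_prod_def sum.atLeast1_atMost_eq atLeast0LessThan
        mat_of_fun_def adjugate_def intro!: sum.cong)
  also have "\<dots> = (if i = j then mat_det B m else 0)"
    using assms by (auto simp: adj_mat(2)[OF mat_of_fun_carrier] mat_det_eq_det)
  finally show ?thesis .
qed

lemma adjugate_mult_sum:
  assumes "i \<in> {1..m}" "j \<in> {1..m}"
  shows "(\<Sum>k\<in>{1..m}. adjugate B m i k * B k j) = (if i = j then mat_det B m else 0)"
proof -
  let ?J = "mat_of_fun B m"
  have "(\<Sum>k\<in>{1..m}. adjugate B m i k * B k j) = (adj_mat ?J * ?J) $$ (i - 1, j - 1)"
    using assms adj_mat(1)[of ?J m]
    by (auto simp: index_mult_mat scalar_prod_def sum.atLeast1_atMost_eq atLeast0LessThan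
        mat_of_fun_def adjugate_def intro!: sum.cong)
  also have "\<dots> = (if i = j then mat_det B m else 0)"
    using assms by (auto simp: adj_mat(3)[OF mat_of_fun_carrier] mat_det_eq_det)
  finally show ?thesis .
qed

lemma adjugate_last: "adjugate B (Suc m) (Suc m) (Suc m) = mat_det B m"
  using mat_delete_last_mat_of_fun[of B m]
  by (simp add: adjugate_def adj_mat_def cofactor_def mat_det_eq_det, simp add: mat_of_fun_def)

lemma mat_det_chain_recurrence:
  fixes B :: "nat \<Rightarrow> nat \<Rightarrow> int"
  assumes "B (Suc (Suc k)) (Suc (Suc k)) = 2"
    and "B (Suc k) (Suc (Suc k)) = -1" and "B (Suc (Suc k)) (Suc k) = -1"
    and "\<And>j. j \<in> {1..k} \<Longrightarrow> B (Suc (Suc k)) j = 0 \<and> B j (Suc (Suc k)) = 0"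
  shows "mat_det B (Suc (Suc k)) = 2 * mat_det B (Suc k) - mat_det B k"
proof -
  define J where "J = mat_of_fun B (Suc (Suc k))"
  have J: "J \<in> carrier_mat (Suc (Suc k)) (Suc (Suc k))" by (simp add: J_def)
  define N where "N = mat_delete J (Suc k) k"
  have N: "N \<in> carrier_mat (Suc k) (Suc k)" using J by (simp add: N_def mat_delete_def)
  have N_last_col: "N $$ (i, k) = B (Suc i) (Suc (Suc k))" if "i < Suc k" for i
    using that by (simp add: N_def J_def mat_of_fun_def mat_delete_def)
  have N_minor: "mat_delete N k k = mat_of_fun B k"
    by (rule eq_matI) (auto simp: N_def J_def mat_of_fun_def mat_delete_def)
  have "det N = (\<Sum>i<Suc k. N $$ (i, k) * cofactor N i k)"
    by (rule laplace_expansion_column[OF N]) simp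
  also have "\<dots> = N $$ (k, k) * cofactor N k k"
    using assms(4) by (simp add: N_last_col)
  also have "\<dots> = - det (mat_of_fun B k)"
    using N_last_col[of k] assms(2) N_minor by (simp add: cofactor_def)
  finally have det_N: "det N = - det (mat_of_fun B k)" .
  have "det J = (\<Sum>j<Suc (Suc k). J $$ (Suc k, j) * cofactor J (Suc k) j)"
    by (rule laplace_expansion_row[OF J]) simp
  also have "\<dots> = J $$ (Suc k, k) * cofactor J (Suc k) k
      + J $$ (Suc k, Suc k) * cofactor J (Suc k) (Suc k)"
    using assms(4) by (simp add: J_def mat_of_fun_def)
  also have "\<dots> = 2 * det (mat_of_fun B (Suc k)) - det (mat_of_fun B k)"
    using assms(1,3) det_N mat_delete_last_mat_of_fun[of B "Suc k"]
    by (simp add: J_def mat_of_fun_def cofactor_def N_def)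
  finally show ?thesis by (simp add: mat_det_eq_det J_def)
qed

lemma det_mult_coordinate:
  assumes "c \<in> hdual m" and "j \<in> {1..m}"
  shows "of_int (mat_det B m) * c j =
    (\<Sum>k\<in>{1..m}. of_int (adjugate B m j k) * coroot_pairing B m c k)"
proof -
  have adj_row: "(\<Sum>k\<in>{1..m}. adjugate B m j k * B k l) = (if j = l then mat_det B m else 0)"
    if "l \<in> {1..m}" for l
    using assms(2) that by (rule adjugate_mult_sum)
  have "(\<Sum>k\<in>{1..m}. of_int (adjugate B m j k) * coroot_pairing B m c k)
      = (\<Sum>l\<in>{1..m}. c l * of_int (\<Sum>k\<in>{1..m}. adjugate B m j k * B k l))"
    unfolding coroot_pairing_def sum_distrib_left
    by (subst sum.swap) (simp add: sum_distrib_left algebra_simps)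
  also have "\<dots> = (\<Sum>l\<in>{1..m}. c l * of_int (if j = l then mat_det B m else 0))"
    by (intro sum.cong refl) (simp only: adj_row)
  also have "\<dots> = of_int (mat_det B m) * c j"
    using assms(2) by (simp add: if_distrib cong: if_cong)
  finally show ?thesis by simp
qed

lemma det_mult_weight_in_Ints:
  assumes "c \<in> weight_lattice B m" and "j \<in> {1..m}"
  shows "of_int (mat_det B m) * c j \<in> \<int>"
  using assms det_mult_coordinate[of c m j B]
  by (auto simp: weight_lattice_def intro!: Ints_sum Ints_mult)

lemma Ints_if_coprime_multiples_in_Ints:
  fixes x :: "'a :: ring_1"
  assumes "coprime a b" and "of_int a * x \<in> \<int>" and "of_int b * x \<in> \<int>"
  shows "x \<in> \<int>"
proof -
  obtain u v where "u * a + v * b = 1"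
    using bezout_int[of a b] assms(1) by (auto simp: coprime_iff_gcd_eq_1)
  then have "x = of_int (u * a + v * b) * x" by simp
  also have "\<dots> = of_int u * (of_int a * x) + of_int v * (of_int b * x)"
    by (simp only: of_int_add of_int_mult distrib_right mult.assoc)
  also have "\<dots> \<in> \<int>" using assms(2,3) by (blast intro: Ints_add Ints_mult Ints_of_int)
  finally show ?thesis .
qed

lemma weight_lattice_truncate:
  assumes "z \<in> weight_lattice B (Suc m)" and "z (Suc m) \<in> \<int>"
  shows "z(Suc m := 0) \<in> weight_lattice B m"
proof -
  have "coroot_pairing B m (z(Suc m := 0)) i \<in> \<int>" if "i \<in> {1..m}" for i
  proof -
    have "coroot_pairing B (Suc m) z i =
        coroot_pairing B m (z(Suc m := 0)) i + z (Suc m) * of_int (B i (Suc m))"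
      by (simp add: coroot_pairing_def)
    moreover have "coroot_pairing B (Suc m) z i \<in> \<int>"
      using assms(1) that by (simp add: weight_lattice_def)
    ultimately show ?thesis
      using assms(2) by (metis Ints_diff Ints_mult Ints_of_int add_diff_cancel_right')
  qed
  then show ?thesis
    using assms(1) by (auto simp: weight_lattice_def hdual_def)
qed

lemma weight_in_root_lattice_if_last_in_Ints:
  assumes "coprime (mat_det B m) (mat_det B (Suc m))"
    and "z \<in> weight_lattice B (Suc m)" and "z (Suc m) \<in> \<int>"
  shows "z \<in> root_lattice (Suc m)"
proof -
  have "z j \<in> \<int>" if j: "j \<in> {1..Suc m}" for j
  proof (cases "j = Suc m")
    case True
    then show ?thesis using assms(3) by simp
  next
    case False
    have "of_int (mat_det B m) * (z(Suc m := 0)) j \<in> \<int>"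
      by (rule det_mult_weight_in_Ints[OF weight_lattice_truncate[OF assms(2,3)]])
        (use j False in auto)
    with False have "of_int (mat_det B m) * z j \<in> \<int>" by simp
    moreover have "of_int (mat_det B (Suc m)) * z j \<in> \<int>"
      using j assms(2) by (rule det_mult_weight_in_Ints[rotated])
    ultimately show ?thesis by (rule Ints_if_coprime_multiples_in_Ints[OF assms(1)])
  qed
  then show ?thesis
    using assms(2) by (simp add: root_lattice_def weight_lattice_def)
qed

lemma dual_coroot_iff_adjugate_column:
  assumes "mat_det B m \<noteq> 0" and "k \<in> {1..m}"
  shows "c \<in> hdual m \<and> (\<forall>i\<in>{1..m}. coroot_pairing B m c i = (if i = k then 1 else 0)) \<longleftrightarrow>
    c = (\<lambda>j. if j \<in> {1..m} then of_int (adjugate B m j k) / of_int (mat_det B m) else 0)"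
    (is "?dual c \<longleftrightarrow> c = ?\<omega>")
proof
  assume c: "?dual c"
  show "c = ?\<omega>"
  proof
    fix j
    show "c j = ?\<omega> j"
    proof (cases "j \<in> {1..m}")
      case True
      have "of_int (mat_det B m) * c j = of_int (adjugate B m j k)"
        using det_mult_coordinate[OF _ True, of c B] c assms(2)
        by (simp add: if_distrib cong: if_cong)
      then show ?thesis using True assms(1) by (simp add: field_simps)
    next
      case False
      then show ?thesis using c by (auto simp: hdual_def)
    qed
  qed
next
  assume c: "c = ?\<omega>"
  have "coroot_pairing B m ?\<omega> i = (if i = k then 1 else 0)" if i: "i \<in> {1..m}" for i
  proof -
    have "coroot_pairing B m ?\<omega> i =
        of_int (\<Sum>j\<in>{1..m}. B i j * adjugate B m j k) / of_int (mat_det B m)"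
      unfolding coroot_pairing_def by (simp add: sum_divide_distrib mult.commute)
    also have "\<dots> = of_int (if i = k then mat_det B m else 0) / of_int (mat_det B m)"
      by (simp only: sum_mult_adjugate[OF i assms(2)])
    finally show ?thesis using assms(1) by simp
  qed
  then show "?dual c" using c by (simp add: hdual_def)
qed

lemma fund_weight_eq_adjugate_column:
  assumes "mat_det B m \<noteq> 0" and "k \<in> {1..m}"
  shows "fund_weight B m k =
    (\<lambda>j. if j \<in> {1..m} then of_int (adjugate B m j k) / of_int (mat_det B m) else 0)"
  unfolding fund_weight_def dual_coroot_iff_adjugate_column[OF assms] by simp

lemma fund_weight_in_weight_lattice:
  assumes "mat_det B m \<noteq> 0" and "k \<in> {1..m}"
  shows "fund_weight B m k \<in> weight_lattice B m"
  using dual_coroot_iff_adjugate_column[OF assms, of "fund_weight B m k"]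
  by (auto simp: weight_lattice_def fund_weight_eq_adjugate_column[OF assms])

lemma weight_lattice_diff_int_mult:
  assumes "w \<in> weight_lattice B m" and "v \<in> weight_lattice B m"
  shows "(\<lambda>x. w x - of_int k * v x) \<in> weight_lattice B m"
proof -
  have "coroot_pairing B m (\<lambda>x. w x - of_int k * v x) i =
      coroot_pairing B m w i - of_int k * coroot_pairing B m v i" for i
    unfolding coroot_pairing_def by (simp add: sum_subtractf sum_distrib_left algebra_simps)
  then show ?thesis
    using assms by (auto simp: weight_lattice_def hdual_def)
qed

text \<open>The last coordinate of \<open>\<omega>\<^sub>m\<^sub>+\<^sub>1\<close> is \<open>D\<^sub>m / D\<^sub>m\<^sub>+\<^sub>1\<close> and that of a weight is
  \<open>Y / D\<^sub>m\<^sub>+\<^sub>1\<close> for an integer \<open>Y\<close>; with \<open>a D\<^sub>m + b D\<^sub>m\<^sub>+\<^sub>1 = 1\<close>, subtracting \<open>Y a \<omega>\<^sub>m\<^sub>+\<^sub>1\<close>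
  leaves the integer \<open>Y b\<close>.\<close>

lemma weight_lattice_mod_root_lattice_cyclic:
  assumes "mat_det B (Suc m) \<noteq> 0" and "coprime (mat_det B m) (mat_det B (Suc m))"
    and "w \<in> weight_lattice B (Suc m)"
  shows "\<exists>k::int. (\<lambda>x. w x - of_int k * fund_weight B (Suc m) (Suc m) x) \<in> root_lattice (Suc m)"
proof -
  define D where "D = mat_det B (Suc m)"
  define \<omega> where "\<omega> = fund_weight B (Suc m) (Suc m)"
  have \<omega>_last: "\<omega> (Suc m) = of_int (mat_det B m) / of_int D"
    using fund_weight_eq_adjugate_column[OF assms(1), of "Suc m"]
    by (simp add: \<omega>_def D_def adjugate_last)
  obtain Y where Y: "of_int D * w (Suc m) = of_int Y"
    using det_mult_weight_in_Ints[OF assms(3), of "Suc m"] by (auto simp: D_def elim: Ints_cases)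
  obtain a b where ab: "a * mat_det B m + b * D = 1"
    using bezout_int[of "mat_det B m" D] assms(2) by (auto simp: D_def coprime_iff_gcd_eq_1)
  define z where "z = (\<lambda>x. w x - of_int (Y * a) * \<omega> x)"
  have "z (Suc m) = of_int Y * (1 - of_int a * of_int (mat_det B m)) / of_int D"
    using Y assms(1) by (simp add: z_def \<omega>_last D_def field_simps)
  also have "(1 - of_int a * of_int (mat_det B m) :: complex) = of_int b * of_int D"
    using arg_cong[OF ab, of "of_int :: int \<Rightarrow> complex"] by (simp add: algebra_simps)
  also have "of_int Y * (of_int b * of_int D) / of_int D = (of_int (Y * b) :: complex)"
    using assms(1) by (simp add: D_def)
  finally have "z (Suc m) \<in> \<int>" by simp
  moreover have "z \<in> weight_lattice B (Suc m)"
    unfolding z_def \<omega>_def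
    by (intro weight_lattice_diff_int_mult assms(3) fund_weight_in_weight_lattice assms(1)) simp
  ultimately have "z \<in> root_lattice (Suc m)"
    by (intro weight_in_root_lattice_if_last_in_Ints[OF assms(2)])
  then show ?thesis unfolding z_def \<omega>_def by blast
qed

lemma det_ext_recurrence:
  assumes "d \<le> Suc k"
  shows "det_ext C d (Suc (Suc k)) = 2 * det_ext C d (Suc k) - det_ext C d k"
  unfolding det_ext_def
proof (rule mat_det_chain_recurrence)
  show "ext_cartan C d (Suc (Suc k)) j = 0 \<and> ext_cartan C d j (Suc (Suc k)) = 0"
    if "j \<in> {1..k}" for j
    using that assms by (auto simp: ext_cartan_def)
qed (use assms in \<open>auto simp: ext_cartan_def\<close>)

lemma det_ext_diff:
  assumes "1 \<le> d" and "d \<le> n"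
  shows "det_ext C d n - det_ext C d (n - 1) = delta C d"
  using assms(2)
proof (induction n rule: nat_induct_at_least)
  case base
  then show ?case
    using det_ext_recurrence[of d "d - 1" C] assms(1) by (simp add: delta_def)
next
  case (Suc n)
  then show ?case
    using det_ext_recurrence[of d "n - 1" C] assms(1) by (simp add: Suc_diff_le)
qed

lemma det_ext_arithmetic:
  assumes "1 \<le> d"
  shows "det_ext C d (d + t) = mat_det C d + int t * delta C d"
proof (induction t)
  case 0
  show ?case unfolding det_ext_def by (simp, rule mat_det_cong) (simp add: ext_cartan_def)
next
  case (Suc t)
  then show ?case using det_ext_diff[OF assms, of "Suc (d + t)" C] by (simp add: algebra_simps)
qed

lemma coprime_det_ext_consecutive:
  assumes "extensible C d" and "d \<le> n"
  shows "coprime (det_ext C d (n - 1)) (det_ext C d n)"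
proof -
  from assms(1) have d: "1 \<le> d" and "gcd (delta C d) (mat_det C d) = 1"
    by (auto simp: extensible_def marked_dynkin_def)
  obtain t where n: "n = d + t" using assms(2) le_Suc_ex by blast
  have "gcd (det_ext C d (n - 1)) (det_ext C d n) = gcd (det_ext C d n - delta C d) (det_ext C d n)"
    using det_ext_diff[OF d assms(2), of C] by (simp add: algebra_simps)
  also have "\<dots> = gcd (delta C d) (int t * delta C d + mat_det C d)"
    by (simp add: gcd_diff2 n det_ext_arithmetic[OF d] add.commute)
  also have "\<dots> = 1"
    by (simp add: gcd_add_mult \<open>gcd (delta C d) (mat_det C d) = 1\<close>)
  finally show ?thesis by (simp add: coprime_iff_gcd_eq_1)
qed

theorem lemma3p1:
  fixes C :: "nat \<Rightarrow> nat \<Rightarrow> int" and d n :: nat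
  assumes "extensible C d"
    and "n \<ge> d"
    and "det_ext C d n \<noteq> 0"
  shows "fund_weight (ext_cartan C d) n n \<in> weight_lattice (ext_cartan C d) n \<and>
    (\<forall>w\<in>weight_lattice (ext_cartan C d) n. \<exists>k::int.
        (\<lambda>x. w x - of_int k * fund_weight (ext_cartan C d) n n x) \<in> root_lattice n)"
proof -
  obtain m where n: "n = Suc m"
    using assms(1,2) not0_implies_Suc by (fastforce simp: extensible_def marked_dynkin_def)
  have det: "mat_det (ext_cartan C d) (Suc m) \<noteq> 0"
    using assms(3) by (simp add: n det_ext_def)
  have coprime: "coprime (mat_det (ext_cartan C d) m) (mat_det (ext_cartan C d) (Suc m))"
    using coprime_det_ext_consecutive[OF assms(1,2)] by (simp add: n det_ext_def)
  show ?thesis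
    using fund_weight_in_weight_lattice[OF det] weight_lattice_mod_root_lattice_cyclic[OF det coprime]
    by (simp add: n)
qed

end
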